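(* Let $k$ be a field of prime characteristic $p$. Define $T$-spaces of $k_0\langle X\rangle$ by $H_1=\{x_1^p\}^S$ and $H_{n+1}=(H_nH_1)^S$ for $n\ge1$. Then $(H_mH_n)^S=H_{m+n}$ for all $m,n\ge1$.
   Context: $X=\{x_1,x_2,\ldots\}$ is countably infinite; $k_0\langle X\rangle$ is the free associative (non-unital) $k$-algebra on $X$. A $T$-space is a $k$-subspace of $k_0\langle X\rangle$ invariant under every algebra endomorphism of $k_0\langle X\rangle$; $(A)^S$ is the $T$-space generated by a subset $A$. For subsets $A,B$, $AB=\{ab:a\in A,b\in B\}$. *)

theory Defs
  imports Main "HOL-Library.Poly_Mapping" "HOL-Computational_Algebra.Primes"
begin

text \<open>Free non-unital associative algebra k_0<X> on X = {x_1, x_2, ...}: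
  finitely supported k-linear combinations of nonempty words over nat
  (the letter i stands for x_(i+1)).\<close>

type_synonym 'k ncpoly = "nat list \<Rightarrow>\<^sub>0 'k"

definition FA :: "'k::field ncpoly set" where
  "FA = {f. [] \<notin> Poly_Mapping.keys f}"

definition var :: "nat \<Rightarrow> 'k::field ncpoly" where
  "var i = Poly_Mapping.single [i] 1"

definition smult :: "'k::field \<Rightarrow> 'k ncpoly \<Rightarrow> 'k ncpoly" where
  "smult c f = Poly_Mapping.map (\<lambda>x. c * x) f"

definition pmul :: "'k::field ncpoly \<Rightarrow> 'k ncpoly \<Rightarrow> 'k ncpoly" where
  "pmul f g = (\<Sum>u\<in>Poly_Mapping.keys f. \<Sum>v\<in>Poly_Mapping.keys g.
                 Poly_Mapping.single (u @ v) (Poly_Mapping.lookup f u * Poly_Mapping.lookup g v))"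

fun ppow :: "'k::field ncpoly \<Rightarrow> nat \<Rightarrow> 'k ncpoly" where
  "ppow f 0 = 0"
| "ppow f (Suc 0) = f"
| "ppow f (Suc (Suc n)) = pmul f (ppow f (Suc n))"

definition setmul :: "'k::field ncpoly set \<Rightarrow> 'k ncpoly set \<Rightarrow> 'k ncpoly set" where
  "setmul A B = {pmul a b | a b. a \<in> A \<and> b \<in> B}"

definition is_endo :: "('k::field ncpoly \<Rightarrow> 'k ncpoly) \<Rightarrow> bool" where
  "is_endo \<phi> \<longleftrightarrow> (\<forall>f\<in>FA. \<phi> f \<in> FA) \<and>
     (\<forall>f\<in>FA. \<forall>g\<in>FA. \<phi> (f + g) = \<phi> f + \<phi> g \<and> \<phi> (pmul f g) = pmul (\<phi> f) (\<phi> g)) \<and>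
     (\<forall>f\<in>FA. \<forall>c. \<phi> (smult c f) = smult c (\<phi> f))"

definition T_space :: "'k::field ncpoly set \<Rightarrow> bool" where
  "T_space V \<longleftrightarrow> V \<subseteq> FA \<and> 0 \<in> V \<and>
     (\<forall>f\<in>V. \<forall>g\<in>V. f + g \<in> V) \<and> (\<forall>f\<in>V. \<forall>c. smult c f \<in> V) \<and>
     (\<forall>\<phi>. is_endo \<phi> \<longrightarrow> \<phi> ` V \<subseteq> V)"

definition Tgen :: "'k::field ncpoly set \<Rightarrow> 'k ncpoly set" where
  "Tgen A = \<Inter>{V. T_space V \<and> A \<subseteq> V}"

text \<open>H_1 = {x_1^p}^S, H_(n+1) = (H_n H_1)^S; H 0 is an unused dummy.\<close>
fun H :: "nat \<Rightarrow> nat \<Rightarrow> 'k::field ncpoly set" where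
  "H p 0 = {0}"
| "H p (Suc 0) = Tgen {ppow (var 0) p}"
| "H p (Suc (Suc n)) = Tgen (setmul (H p (Suc n)) (H p (Suc 0)))"

end

theory Submission
  imports Defs
begin

text \<open>
  By induction, H_n is the T-space generated by the single monomial x_1^p x_2^p ... x_n^p.
  The inductive step and the theorem both rest on one fact: if u involves only x_1, ..., x_N
  and v' is v with every variable index raised by N, then (u^S v^S)^S = (u v')^S.
  Indeed u and v' have no variable in common, so for endomorphisms \<phi>, \<psi> there is a single
  endomorphism sending u to \<phi> u and v' to \<psi> v; hence every product \<phi> u \<psi> v lies in (u v')^S,
  and a residual argument extends this from such products to all of u^S v^S.
\<close>

section \<open>The free algebra as a monoid algebra\<close>

text \<open>With concatenation as addition on words, the convolution product of poly_mapping
  is the product pmul of the free algebra, and Poly_Mapping.single [] c is the scalar c.\<close>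

instantiation list :: (type) monoid_add
begin
definition plus_list :: "'a list \<Rightarrow> 'a list \<Rightarrow> 'a list" where "plus_list xs ys = xs @ ys"
definition zero_list :: "'a list" where "zero_list = []"
instance by standard (auto simp: plus_list_def zero_list_def)
end

lemma poly_mapping_sum_single:
  "f = (\<Sum>w\<in>Poly_Mapping.keys f. Poly_Mapping.single w (Poly_Mapping.lookup f w))"
  by (rule poly_mapping_eqI) (simp add: lookup_sum lookup_single when_def in_keys_iff)

lemma single_mult_single:
  "Poly_Mapping.single u a * Poly_Mapping.single v b = Poly_Mapping.single (u @ v) (a * (b::'k::field))"
  using mult_single[of u a v b] by (simp add: plus_list_def)

lemma single_Nil_one: "Poly_Mapping.single [] 1 = (1::'k::field ncpoly)"
  using single_one[where 'a="nat list"] unfolding zero_list_def .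

lemma single_Nil_mult:
  "Poly_Mapping.single [] (a * b) = Poly_Mapping.single [] a * Poly_Mapping.single [] (b::'k::field)"
  by (simp add: single_mult_single)

lemma single_Nil_commute: "Poly_Mapping.single [] c * h = h * Poly_Mapping.single [] (c::'k::field)"
proof -
  let ?m = "\<lambda>w. Poly_Mapping.single w (Poly_Mapping.lookup h w)"
  have "Poly_Mapping.single [] c * h = (\<Sum>w\<in>Poly_Mapping.keys h. Poly_Mapping.single [] c * ?m w)"
    by (subst poly_mapping_sum_single[of h]) (simp add: sum_distrib_left)
  also have "\<dots> = (\<Sum>w\<in>Poly_Mapping.keys h. ?m w * Poly_Mapping.single [] c)"
    by (simp add: single_mult_single mult.commute)
  also have "\<dots> = h * Poly_Mapping.single [] c"
    by (subst (2) poly_mapping_sum_single[of h]) (simp add: sum_distrib_right)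
  finally show ?thesis .
qed

lemma pmul_eq_mult: "pmul f g = f * (g :: 'k::field ncpoly)"
proof -
  have "f * g = (\<Sum>u\<in>Poly_Mapping.keys f. Poly_Mapping.single u (Poly_Mapping.lookup f u))
              * (\<Sum>v\<in>Poly_Mapping.keys g. Poly_Mapping.single v (Poly_Mapping.lookup g v))"
    by (metis poly_mapping_sum_single)
  also have "\<dots> = pmul f g"
    by (simp add: pmul_def sum_distrib_left sum_distrib_right single_mult_single) (rule sum.swap)
  finally show ?thesis by simp
qed

lemma setmul_eq: "setmul A B = {a * b | a b. a \<in> A \<and> b \<in> B}"
  by (simp add: setmul_def pmul_eq_mult)

lemma smult_eq_mult: "smult c f = Poly_Mapping.single [] c * f"
  using mult_map_scale_conv_mult[of c f] by (simp add: smult_def zero_list_def)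

lemma smult_mult_left: "smult c f * g = smult c (f * (g::'k::field ncpoly))"
  by (simp add: smult_eq_mult mult.assoc)

lemma smult_mult_right: "f * smult c g = smult c (f * (g::'k::field ncpoly))"
proof -
  have "f * (Poly_Mapping.single [] c * g) = (f * Poly_Mapping.single [] c) * g"
    by (simp add: mult.assoc)
  also have "\<dots> = Poly_Mapping.single [] c * (f * g)"
    by (simp only: single_Nil_commute mult.assoc)
  finally show ?thesis by (simp add: smult_eq_mult)
qed

lemma lookup_smult: "Poly_Mapping.lookup (smult c f) w = c * Poly_Mapping.lookup f w"
  unfolding smult_def by (simp add: map.rep_eq when_def)

lemma keys_smult: "Poly_Mapping.keys (smult c f) \<subseteq> Poly_Mapping.keys f"
  by (auto simp: in_keys_iff lookup_smult)

lemma FA_iff: "f \<in> FA \<longleftrightarrow> (\<forall>w\<in>Poly_Mapping.keys f. w \<noteq> [])"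
  unfolding FA_def by auto

lemma FA_0 [simp]: "0 \<in> FA"
  by (simp add: FA_iff)

lemma FA_add: "f \<in> FA \<Longrightarrow> g \<in> FA \<Longrightarrow> f + g \<in> FA"
  using keys_add[of f g] unfolding FA_iff by blast

lemma FA_mult_right: "(g::'k::field ncpoly) \<in> FA \<Longrightarrow> f * g \<in> FA"
  using keys_mult[of f g] unfolding FA_iff by (auto simp: plus_list_def)

lemma FA_smult: "f \<in> FA \<Longrightarrow> smult c f \<in> FA"
  by (simp add: smult_eq_mult FA_mult_right)

lemma FA_single: "w \<noteq> [] \<Longrightarrow> Poly_Mapping.single w c \<in> FA"
  by (simp add: FA_iff)

lemma FA_var [simp]: "var i \<in> FA"
  by (simp add: var_def FA_single)

lemma FA_sum: "finite I \<Longrightarrow> (\<And>i. i \<in> I \<Longrightarrow> f i \<in> FA) \<Longrightarrow> sum f I \<in> FA"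
  by (induction I rule: finite_induct) (auto intro: FA_add)

section \<open>Endomorphisms as substitutions\<close>

lemma is_endo_FA: "is_endo \<phi> \<Longrightarrow> f \<in> FA \<Longrightarrow> \<phi> f \<in> FA"
  unfolding is_endo_def by blast

lemma is_endo_add: "is_endo \<phi> \<Longrightarrow> f \<in> FA \<Longrightarrow> g \<in> FA \<Longrightarrow> \<phi> (f + g) = \<phi> f + \<phi> g"
  unfolding is_endo_def by blast

lemma is_endo_mult: "is_endo \<phi> \<Longrightarrow> f \<in> FA \<Longrightarrow> g \<in> FA \<Longrightarrow> \<phi> (f * g) = \<phi> f * \<phi> g"
  unfolding is_endo_def by (simp add: pmul_eq_mult)

lemma is_endo_smult: "is_endo \<phi> \<Longrightarrow> f \<in> FA \<Longrightarrow> \<phi> (smult c f) = smult c (\<phi> f)"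
  unfolding is_endo_def by blast

lemma is_endo_0: "is_endo \<phi> \<Longrightarrow> \<phi> 0 = 0"
  using is_endo_add[OF _ FA_0 FA_0, of \<phi>] by simp

lemma is_endo_sum:
  assumes "is_endo \<phi>" "finite I" "\<And>i. i \<in> I \<Longrightarrow> f i \<in> FA"
  shows "\<phi> (sum f I) = (\<Sum>i\<in>I. \<phi> (f i))"
  using assms(2,3)
  by (induction I rule: finite_induct) (auto simp: is_endo_0[OF assms(1)] is_endo_add[OF assms(1)] FA_sum)

lemma is_endo_id: "is_endo (\<lambda>x. x)"
  unfolding is_endo_def by simp

lemma is_endo_comp: "is_endo \<phi> \<Longrightarrow> is_endo \<psi> \<Longrightarrow> is_endo (\<lambda>x. \<phi> (\<psi> x))"
  unfolding is_endo_def by simp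

definition subst :: "(nat \<Rightarrow> 'k::field ncpoly) \<Rightarrow> 'k ncpoly \<Rightarrow> 'k ncpoly" where
  "subst \<sigma> f = (\<Sum>w\<in>Poly_Mapping.keys f.
     Poly_Mapping.single [] (Poly_Mapping.lookup f w) * prod_list (map \<sigma> w))"

lemma subst_eq_sum_superset:
  assumes "finite K" "Poly_Mapping.keys f \<subseteq> K"
  shows "subst \<sigma> f = (\<Sum>w\<in>K. Poly_Mapping.single [] (Poly_Mapping.lookup f w) * prod_list (map \<sigma> w))"
  unfolding subst_def by (rule sum.mono_neutral_left[OF assms]) (auto simp: in_keys_iff)

lemma subst_0 [simp]: "subst \<sigma> 0 = 0"
  by (simp add: subst_def)

lemma subst_single: "subst \<sigma> (Poly_Mapping.single w c) = Poly_Mapping.single [] c * prod_list (map \<sigma> w)"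
  by (simp add: subst_def)

lemma subst_var [simp]: "subst \<sigma> (var i) = \<sigma> i"
  by (simp add: var_def subst_single single_Nil_one)

lemma subst_add: "subst \<sigma> (f + g) = subst \<sigma> f + subst \<sigma> g"
proof -
  let ?K = "Poly_Mapping.keys f \<union> Poly_Mapping.keys g"
  have fin: "finite ?K" by simp
  let ?s = "\<lambda>h. \<Sum>w\<in>?K. Poly_Mapping.single [] (Poly_Mapping.lookup h w) * prod_list (map \<sigma> w)"
  have "subst \<sigma> (f + g) = ?s (f + g)"
    by (rule subst_eq_sum_superset[OF fin keys_add])
  also have "\<dots> = ?s f + ?s g"
    by (simp add: lookup_add single_add distrib_right sum.distrib)
  also have "\<dots> = subst \<sigma> f + subst \<sigma> g"
    by (simp add: subst_eq_sum_superset[OF fin, symmetric])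
  finally show ?thesis .
qed

lemma subst_sum: "finite I \<Longrightarrow> subst \<sigma> (sum f I) = (\<Sum>i\<in>I. subst \<sigma> (f i))"
  by (induction I rule: finite_induct) (auto simp: subst_add)

lemma subst_smult: "subst \<sigma> (smult c f) = smult c (subst \<sigma> f)"
proof -
  have "subst \<sigma> (smult c f) = (\<Sum>w\<in>Poly_Mapping.keys f.
      Poly_Mapping.single [] (c * Poly_Mapping.lookup f w) * prod_list (map \<sigma> w))"
    by (simp add: subst_eq_sum_superset[OF _ keys_smult] lookup_smult)
  then show ?thesis
    by (simp only: single_Nil_mult subst_def smult_eq_mult sum_distrib_left mult.assoc)
qed

lemma subst_mult_single:
  "subst \<sigma> (Poly_Mapping.single u a * Poly_Mapping.single v b)
     = subst \<sigma> (Poly_Mapping.single u a) * subst \<sigma> (Poly_Mapping.single v b)"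
proof -
  let ?a = "Poly_Mapping.single [] a" and ?b = "Poly_Mapping.single [] b"
  let ?U = "prod_list (map \<sigma> u)" and ?V = "prod_list (map \<sigma> v)"
  have "subst \<sigma> (Poly_Mapping.single u a * Poly_Mapping.single v b) = ?a * ?b * (?U * ?V)"
    unfolding single_mult_single subst_single map_append prod_list.append single_Nil_mult[symmetric]
    by simp
  also have "\<dots> = ?a * (?b * ?U) * ?V"
    by (simp add: mult.assoc)
  also have "\<dots> = ?a * (?U * ?b) * ?V"
    by (simp only: single_Nil_commute)
  finally show ?thesis
    by (simp add: subst_single mult.assoc)
qed

lemma subst_mult: "subst \<sigma> (f * g) = subst \<sigma> f * subst \<sigma> g"
proof -
  let ?m = "\<lambda>h w. Poly_Mapping.single w (Poly_Mapping.lookup h w)"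
  have expand: "subst \<sigma> f' * subst \<sigma> g' =
      (\<Sum>u\<in>Poly_Mapping.keys f. \<Sum>v\<in>Poly_Mapping.keys g. subst \<sigma> (?m f u) * subst \<sigma> (?m g v))"
    if "f' = (\<Sum>u\<in>Poly_Mapping.keys f. ?m f u)" "g' = (\<Sum>v\<in>Poly_Mapping.keys g. ?m g v)" for f' g'
    using that by (simp add: subst_sum sum_distrib_left sum_distrib_right) (rule sum.swap)
  have "f * g = (\<Sum>u\<in>Poly_Mapping.keys f. ?m f u) * (\<Sum>v\<in>Poly_Mapping.keys g. ?m g v)"
    by (metis poly_mapping_sum_single)
  also have "\<dots> = (\<Sum>u\<in>Poly_Mapping.keys f. \<Sum>v\<in>Poly_Mapping.keys g. ?m f u * ?m g v)"
    by (simp add: sum_distrib_left sum_distrib_right) (rule sum.swap)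
  finally have "subst \<sigma> (f * g) =
      (\<Sum>u\<in>Poly_Mapping.keys f. \<Sum>v\<in>Poly_Mapping.keys g. subst \<sigma> (?m f u) * subst \<sigma> (?m g v))"
    by (simp add: subst_sum subst_mult_single)
  also have "\<dots> = subst \<sigma> f * subst \<sigma> g"
    by (rule expand[symmetric]; rule poly_mapping_sum_single)
  finally show ?thesis .
qed

lemma prod_list_map_FA: "(\<And>i. \<sigma> i \<in> FA) \<Longrightarrow> w \<noteq> [] \<Longrightarrow> prod_list (map \<sigma> w) \<in> FA"
proof (induction w)
  case (Cons i w)
  then show ?case by (cases "w = []") (auto intro: FA_mult_right)
qed simp

lemma subst_FA:
  assumes "\<And>i. \<sigma> i \<in> FA" "f \<in> FA"
  shows "subst \<sigma> f \<in> FA"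
  using assms unfolding subst_def FA_iff[of f]
  by (intro FA_sum FA_mult_right prod_list_map_FA) auto

lemma is_endo_subst: "(\<And>i. \<sigma> i \<in> FA) \<Longrightarrow> is_endo (subst \<sigma>)"
  unfolding is_endo_def by (simp add: subst_FA subst_add subst_smult subst_mult pmul_eq_mult)

lemma is_endo_single_one:
  assumes "is_endo \<phi>" "w \<noteq> []"
  shows "\<phi> (Poly_Mapping.single w 1) = prod_list (map (\<lambda>i. \<phi> (var i)) w)"
  using assms(2)
proof (induction w)
  case Nil
  then show ?case by simp
next
  case (Cons i w)
  show ?case
  proof (cases "w = []")
    case True
    then show ?thesis by (simp add: var_def)
  next
    case False
    have "Poly_Mapping.single (i # w) 1 = var i * Poly_Mapping.single w (1::'a)"
      by (simp add: var_def single_mult_single)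
    then show ?thesis
      using is_endo_mult[OF assms(1) FA_var FA_single[OF False]] Cons False by simp
  qed
qed

lemma is_endo_eq_subst:
  assumes "is_endo \<phi>" "f \<in> FA"
  shows "\<phi> f = subst (\<lambda>i. \<phi> (var i)) f"
proof -
  let ?m = "\<lambda>w. Poly_Mapping.single w (Poly_Mapping.lookup f w)"
  have ne: "w \<noteq> []" if "w \<in> Poly_Mapping.keys f" for w
    using assms(2) that by (simp add: FA_iff)
  have monomial: "\<phi> (?m w) = subst (\<lambda>i. \<phi> (var i)) (?m w)" if "w \<in> Poly_Mapping.keys f" for w
  proof -
    have "?m w = smult (Poly_Mapping.lookup f w) (Poly_Mapping.single w 1)"
      by (simp add: smult_eq_mult single_mult_single)
    then have "\<phi> (?m w) = smult (Poly_Mapping.lookup f w) (\<phi> (Poly_Mapping.single w 1))"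
      using is_endo_smult[OF assms(1) FA_single[OF ne[OF that]]] by simp
    then show ?thesis
      by (simp add: is_endo_single_one[OF assms(1) ne[OF that]] subst_single smult_eq_mult)
  qed
  have "\<phi> f = (\<Sum>w\<in>Poly_Mapping.keys f. \<phi> (?m w))"
    by (subst poly_mapping_sum_single, rule is_endo_sum[OF assms(1)]) (simp_all add: FA_single ne)
  also have "\<dots> = subst (\<lambda>i. \<phi> (var i)) f"
    by (subst (2) poly_mapping_sum_single) (simp add: subst_sum monomial)
  finally show ?thesis .
qed

definition vars_below :: "nat \<Rightarrow> 'k::field ncpoly \<Rightarrow> bool" where
  "vars_below M f \<longleftrightarrow> (\<forall>w\<in>Poly_Mapping.keys f. \<forall>i\<in>set w. i < M)"

lemma exists_vars_below: "\<exists>M. vars_below M f"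
proof -
  have "finite (\<Union>w\<in>Poly_Mapping.keys f. set w)" by simp
  then obtain M where "\<forall>i\<in>(\<Union>w\<in>Poly_Mapping.keys f. set w). i < M"
    using finite_nat_set_iff_bounded by blast
  then show ?thesis unfolding vars_below_def by blast
qed

lemma subst_cong_vars_below:
  assumes "\<And>i. i < M \<Longrightarrow> \<sigma> i = \<tau> i" "vars_below M f"
  shows "subst \<sigma> f = subst \<tau> f"
  unfolding subst_def
proof (rule sum.cong[OF refl])
  fix w assume "w \<in> Poly_Mapping.keys f"
  then have "map \<sigma> w = map \<tau> w"
    using assms by (intro map_cong) (auto simp: vars_below_def)
  then show "Poly_Mapping.single [] (Poly_Mapping.lookup f w) * prod_list (map \<sigma> w) =
      Poly_Mapping.single [] (Poly_Mapping.lookup f w) * prod_list (map \<tau> w)"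
    by (simp only:)
qed

definition shift :: "nat \<Rightarrow> 'k::field ncpoly \<Rightarrow> 'k ncpoly" where
  "shift N = subst (\<lambda>i. var (i + N))"

lemma is_endo_shift: "is_endo (shift N)"
  unfolding shift_def by (rule is_endo_subst) simp

lemma shift_single_one:
  "shift N (Poly_Mapping.single w (1::'k::field)) = Poly_Mapping.single (map (\<lambda>i. i + N) w) 1"
proof -
  have "shift N (Poly_Mapping.single w (1::'k)) = prod_list (map var (map (\<lambda>i. i + N) w))"
    by (simp add: shift_def subst_single single_Nil_one comp_def)
  also have "prod_list (map var w') = Poly_Mapping.single w' (1::'k)" for w'
    by (induction w') (simp_all add: single_Nil_one var_def single_mult_single)
  finally show ?thesis .
qed

text \<open>If f involves only the first M variables, then f and shift M g share no variable,
  so two endomorphisms can be applied to them simultaneously.\<close>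

lemma endo_glue:
  assumes \<phi>: "is_endo \<phi>" and \<psi>: "is_endo \<psi>" and M: "vars_below M f"
    and f: "f \<in> FA" and g: "g \<in> FA"
  shows "\<exists>\<chi>. is_endo \<chi> \<and> \<chi> f = \<phi> f \<and> \<chi> (shift M g) = \<psi> g"
proof -
  define \<tau> where "\<tau> i = (if i < M then \<phi> (var i) else \<psi> (var (i - M)))" for i
  have \<chi>: "is_endo (subst \<tau>)"
    by (rule is_endo_subst) (simp add: \<tau>_def is_endo_FA[OF \<phi>] is_endo_FA[OF \<psi>])
  have "subst \<tau> f = \<phi> f"
    using subst_cong_vars_below[OF _ M, of \<tau> "\<lambda>i. \<phi> (var i)"] is_endo_eq_subst[OF \<phi> f]
    by (simp add: \<tau>_def)
  moreover have "subst \<tau> (shift M g) = \<psi> g"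
  proof -
    have "subst \<tau> (shift M g) = subst (\<lambda>i. subst \<tau> (shift M (var i))) g"
      by (rule is_endo_eq_subst[OF is_endo_comp[OF \<chi> is_endo_shift] g])
    also have "\<dots> = \<psi> g"
      using is_endo_eq_subst[OF \<psi> g] by (simp add: shift_def \<tau>_def)
    finally show ?thesis .
  qed
  ultimately show ?thesis using \<chi> by blast
qed

lemma T_spaceI:
  assumes "V \<subseteq> FA" "0 \<in> V" "\<And>f g. f \<in> V \<Longrightarrow> g \<in> V \<Longrightarrow> f + g \<in> V"
    "\<And>f c. f \<in> V \<Longrightarrow> smult c f \<in> V" "\<And>\<phi> f. is_endo \<phi> \<Longrightarrow> f \<in> V \<Longrightarrow> \<phi> f \<in> V"
  shows "T_space V"
  using assms unfolding T_space_def by blast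

lemma T_space_FA_mem: "T_space V \<Longrightarrow> f \<in> V \<Longrightarrow> f \<in> FA"
  unfolding T_space_def by blast

lemma T_space_0: "T_space V \<Longrightarrow> 0 \<in> V"
  unfolding T_space_def by blast

lemma T_space_add: "T_space V \<Longrightarrow> f \<in> V \<Longrightarrow> g \<in> V \<Longrightarrow> f + g \<in> V"
  unfolding T_space_def by blast

lemma T_space_smult: "T_space V \<Longrightarrow> f \<in> V \<Longrightarrow> smult c f \<in> V"
  unfolding T_space_def by blast

lemma T_space_endo: "T_space V \<Longrightarrow> is_endo \<phi> \<Longrightarrow> f \<in> V \<Longrightarrow> \<phi> f \<in> V"
  unfolding T_space_def by blast

lemma T_space_FA: "T_space FA"
  by (rule T_spaceI) (auto intro: FA_add FA_smult is_endo_FA)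

lemma T_space_Tgen:
  assumes "A \<subseteq> FA"
  shows "T_space (Tgen A)"
proof (rule T_spaceI)
  have "FA \<in> {V. T_space V \<and> A \<subseteq> V}"
    using assms T_space_FA by simp
  then show "Tgen A \<subseteq> FA"
    unfolding Tgen_def by blast
qed (auto simp: Tgen_def intro: T_space_0 T_space_add T_space_smult T_space_endo)

lemma Tgen_least: "T_space V \<Longrightarrow> A \<subseteq> V \<Longrightarrow> Tgen A \<subseteq> V"
  unfolding Tgen_def by auto

lemma Tgen_superset: "A \<subseteq> Tgen A"
  unfolding Tgen_def by auto

text \<open>A residual is closed under an endomorphism because the endomorphism can be glued
  with the identity on a shifted copy of the other factor.\<close>

definition left_residual :: "'k::field ncpoly set \<Rightarrow> 'k ncpoly set \<Rightarrow> 'k ncpoly set" where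
  "left_residual W B = {f \<in> FA. \<forall>g\<in>B. f * g \<in> W}"

definition right_residual :: "'k::field ncpoly set \<Rightarrow> 'k ncpoly set \<Rightarrow> 'k ncpoly set" where
  "right_residual A W = {g \<in> FA. \<forall>f\<in>A. f * g \<in> W}"

lemma T_space_left_residual:
  assumes W: "T_space W" and B: "B \<subseteq> FA" and B_endo: "\<And>\<phi> g. is_endo \<phi> \<Longrightarrow> g \<in> B \<Longrightarrow> \<phi> g \<in> B"
  shows "T_space (left_residual W B)"
proof (rule T_spaceI)
  show "\<phi> f \<in> left_residual W B" if \<phi>: "is_endo \<phi>" and f: "f \<in> left_residual W B" for \<phi> f
  proof -
    have fFA: "f \<in> FA" using f by (simp add: left_residual_def)
    obtain M where M: "vars_below M f" using exists_vars_below by blast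
    have "\<phi> f * g \<in> W" if g: "g \<in> B" for g
    proof -
      have gFA: "g \<in> FA" using B g by blast
      obtain \<chi> where \<chi>: "is_endo \<chi>" "\<chi> f = \<phi> f" "\<chi> (shift M g) = g"
        using endo_glue[OF \<phi> is_endo_id M fFA gFA] by auto
      have "f * shift M g \<in> W"
        using f B_endo[OF is_endo_shift g] by (simp add: left_residual_def)
      then have "\<chi> (f * shift M g) \<in> W" by (rule T_space_endo[OF W \<chi>(1)])
      then show ?thesis
        using is_endo_mult[OF \<chi>(1) fFA is_endo_FA[OF is_endo_shift gFA]] \<chi> by simp
    qed
    then show ?thesis using is_endo_FA[OF \<phi> fFA] by (simp add: left_residual_def)
  qed
qed (use T_space_0[OF W] T_space_add[OF W] T_space_smult[OF W] in
       \<open>auto simp: left_residual_def distrib_right smult_mult_left intro: FA_add FA_smult\<close>)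

lemma T_space_right_residual:
  assumes W: "T_space W" and A: "A \<subseteq> FA" and A_endo: "\<And>\<phi> f. is_endo \<phi> \<Longrightarrow> f \<in> A \<Longrightarrow> \<phi> f \<in> A"
  shows "T_space (right_residual A W)"
proof (rule T_spaceI)
  show "\<psi> g \<in> right_residual A W" if \<psi>: "is_endo \<psi>" and g: "g \<in> right_residual A W" for \<psi> g
  proof -
    have gFA: "g \<in> FA" using g by (simp add: right_residual_def)
    obtain M where M: "vars_below M g" using exists_vars_below by blast
    have "f * \<psi> g \<in> W" if f: "f \<in> A" for f
    proof -
      have fFA: "f \<in> FA" using A f by blast
      obtain \<chi> where \<chi>: "is_endo \<chi>" "\<chi> g = \<psi> g" "\<chi> (shift M f) = f"
        using endo_glue[OF \<psi> is_endo_id M gFA fFA] by auto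
      have "shift M f * g \<in> W"
        using g A_endo[OF is_endo_shift f] by (simp add: right_residual_def)
      then have "\<chi> (shift M f * g) \<in> W" by (rule T_space_endo[OF W \<chi>(1)])
      then show ?thesis
        using is_endo_mult[OF \<chi>(1) is_endo_FA[OF is_endo_shift fFA] gFA] \<chi> by simp
    qed
    then show ?thesis using is_endo_FA[OF \<psi> gFA] by (simp add: right_residual_def)
  qed
qed (use T_space_0[OF W] T_space_add[OF W] T_space_smult[OF W] in
       \<open>auto simp: right_residual_def distrib_left smult_mult_right intro: FA_add FA_smult\<close>)

lemma mult_endo_mem_Tgen_mult_shift:
  assumes \<phi>: "is_endo \<phi>" and u: "u \<in> FA" and v: "v \<in> FA" and N: "vars_below N u"
  shows "u * \<phi> v \<in> Tgen {u * shift N v}"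
proof -
  obtain \<chi> where \<chi>: "is_endo \<chi>" "\<chi> u = u" "\<chi> (shift N v) = \<phi> v"
    using endo_glue[OF is_endo_id \<phi> N u v] by auto
  have "\<chi> (u * shift N v) \<in> Tgen {u * shift N v}"
    by (intro T_space_endo[OF T_space_Tgen \<chi>(1)] Tgen_superset[THEN subsetD])
      (simp_all add: FA_mult_right is_endo_FA[OF is_endo_shift v])
  then show ?thesis
    using is_endo_mult[OF \<chi>(1) u is_endo_FA[OF is_endo_shift v]] \<chi> by simp
qed

lemma Tgen_setmul_Tgen_singletons:
  fixes u v :: "'k::field ncpoly"
  assumes u: "u \<in> FA" and v: "v \<in> FA" and N: "vars_below N u"
  shows "Tgen (setmul (Tgen {u}) (Tgen {v})) = Tgen {u * shift N v}"
proof
  define W where "W = Tgen {u * shift N v}"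
  define V where "V = {\<phi> v | \<phi>. is_endo \<phi>}"
  have W: "T_space W"
    unfolding W_def by (rule T_space_Tgen) (simp add: FA_mult_right is_endo_FA[OF is_endo_shift v])
  have Tu: "T_space (Tgen {u})"
    by (rule T_space_Tgen) (simp add: u)
  have "u \<in> left_residual W V"
    using u mult_endo_mem_Tgen_mult_shift[OF _ u v N]
    by (auto simp: left_residual_def V_def W_def)
  moreover have "T_space (left_residual W V)"
    by (rule T_space_left_residual[OF W]) (auto simp: V_def intro: is_endo_FA[OF _ v] is_endo_comp)
  ultimately have "Tgen {u} \<subseteq> left_residual W V"
    by (simp add: Tgen_least)
  then have "v \<in> right_residual (Tgen {u}) W"
    using is_endo_id v by (fastforce simp: left_residual_def right_residual_def V_def)
  moreover have "T_space (right_residual (Tgen {u}) W)"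
    by (rule T_space_right_residual[OF W]) (auto intro: T_space_FA_mem[OF Tu] T_space_endo[OF Tu])
  ultimately have "Tgen {v} \<subseteq> right_residual (Tgen {u}) W"
    by (simp add: Tgen_least)
  then show "Tgen (setmul (Tgen {u}) (Tgen {v})) \<subseteq> W"
    by (intro Tgen_least[OF W]) (auto simp: setmul_eq right_residual_def)
  have "u * shift N v \<in> setmul (Tgen {u}) (Tgen {v})"
    using Tgen_superset[of "{u}"] Tgen_superset[of "{v}"] T_space_endo[OF T_space_Tgen is_endo_shift, of "{v}" v] v
    unfolding setmul_eq by blast
  moreover have "setmul (Tgen {u}) (Tgen {v}) \<subseteq> FA"
    using T_space_FA_mem[OF T_space_Tgen, of "{v}"] v by (auto simp: setmul_eq intro: FA_mult_right)
  ultimately show "W \<subseteq> Tgen (setmul (Tgen {u}) (Tgen {v}))"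
    unfolding W_def by (intro Tgen_least T_space_Tgen) (auto intro: Tgen_superset[THEN subsetD])
qed

section \<open>The generators of H\<close>

definition pow_word :: "nat \<Rightarrow> nat \<Rightarrow> nat list" where
  "pow_word p n = concat (map (\<lambda>i. replicate p i) [0..<n])"

definition pow_monomial :: "nat \<Rightarrow> nat \<Rightarrow> 'k::field ncpoly" where
  "pow_monomial p n = Poly_Mapping.single (pow_word p n) 1"

lemma pow_word_Suc: "pow_word p (Suc n) = pow_word p n @ replicate p n"
  by (simp add: pow_word_def)

lemma pow_word_add: "pow_word p m @ map (\<lambda>i. i + m) (pow_word p n) = pow_word p (m + n)"
  by (induction n) (simp_all add: pow_word_Suc add.commute pow_word_def)

lemma pow_monomial_FA: "p \<ge> 1 \<Longrightarrow> n \<ge> 1 \<Longrightarrow> pow_monomial p n \<in> FA"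
  by (cases n) (auto simp: pow_monomial_def pow_word_Suc intro!: FA_single)

lemma vars_below_pow_monomial: "vars_below n (pow_monomial p n)"
  by (auto simp: pow_monomial_def vars_below_def pow_word_def)

lemma pow_monomial_add:
  "pow_monomial p m * shift m (pow_monomial p n) = (pow_monomial p (m + n) :: 'k::field ncpoly)"
  by (simp add: pow_monomial_def shift_single_one single_mult_single pow_word_add)

lemma pow_monomial_one:
  assumes "p \<ge> 1"
  shows "pow_monomial p 1 = (ppow (var 0) p :: 'k::field ncpoly)"
proof -
  have "ppow (var 0) (Suc n) = Poly_Mapping.single (replicate (Suc n) 0) (1::'k)" for n
    by (induction n) (simp_all add: var_def pmul_eq_mult single_mult_single)
  then show ?thesis
    using assms by (cases p) (simp_all add: pow_monomial_def pow_word_def)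
qed

lemma Tgen_setmul_pow_monomial:
  assumes "p \<ge> 1" "m \<ge> 1" "n \<ge> 1"
  shows "Tgen (setmul (Tgen {pow_monomial p m}) (Tgen {pow_monomial p n}))
      = Tgen {pow_monomial p (m + n) :: 'k::field ncpoly}"
  using Tgen_setmul_Tgen_singletons[OF pow_monomial_FA[OF assms(1,2)] pow_monomial_FA[OF assms(1,3)]
      vars_below_pow_monomial]
  by (simp add: pow_monomial_add)

lemma H_eq_Tgen_pow_monomial:
  assumes p: "p \<ge> 1" and n: "n \<ge> 1"
  shows "H p n = (Tgen {pow_monomial p n} :: 'k::field ncpoly set)"
  using n
proof (induction n rule: nat_induct_at_least)
  case base
  then show ?case by (simp add: pow_monomial_one[OF p, unfolded One_nat_def])
next
  case (Suc n)
  then have "H p (Suc n) = (Tgen (setmul (H p n) (H p 1)) :: 'k ncpoly set)"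
    by (cases n) simp_all
  also have "\<dots> = Tgen (setmul (Tgen {pow_monomial p n}) (Tgen {pow_monomial p 1}))"
    using Suc by (simp add: pow_monomial_one[OF p, unfolded One_nat_def])
  also have "\<dots> = Tgen {pow_monomial p (Suc n)}"
    using Tgen_setmul_pow_monomial[OF p Suc.hyps, of 1] by simp
  finally show ?case .
qed

theorem lemma4p2:
  fixes p m n :: nat
  assumes "prime p" and "CHAR('k::field) = p" and "m \<ge> 1" and "n \<ge> 1"
  shows "Tgen (setmul (H p m :: 'k ncpoly set) (H p n)) = H p (m + n)"
proof -
  have "p \<ge> 1" using \<open>prime p\<close> prime_ge_1_nat by blast
  then show ?thesis
    using \<open>m \<ge> 1\<close> \<open>n \<ge> 1\<close>
    by (simp add: H_eq_Tgen_pow_monomial Tgen_setmul_pow_monomial)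
qed

end
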